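(* Let $G$ be a finite simple graph without isolated vertices and let $f=(V_0,V_1,V_2)$ be a $\gamma_{tR}(G)$-function. Then $\gamma_{tR}(G)\ge |V(G)|-(\Delta(G)-2)|V_2|$ and $|V_2|\ge \frac{|V(G)|-|V_1|}{\Delta(G)}$. Moreover, if in addition $|V(G)|=\Delta(G)|V_2|+|V_1|$, then $\gamma_{tR}(G)=|V(G)|-(\Delta(G)-2)|V_2|$.
   Context: $\Delta(G)$ denotes the maximum degree of $G$. A total Roman dominating function on $G$ is a map $f:V(G)\to\{0,1,2\}$, written $f=(V_0,V_1,V_2)$ with $V_i=\{v:f(v)=i\}$, such that every vertex of $V_0$ has a neighbor in $V_2$ and the subgraph induced by $V_1\cup V_2$ has no isolated vertices; $\gamma_{tR}(G)$ is the minimum of $\sum_v f(v)$ over such $f$, and a $\gamma_{tR}(G)$-function is one attaining this minimum. *)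

theory Defs
  imports Complex_Main
begin

definition simple_graph :: "'a set \<Rightarrow> ('a \<Rightarrow> 'a \<Rightarrow> bool) \<Rightarrow> bool" where
  "simple_graph V E \<longleftrightarrow> finite V \<and> (\<forall>u v. E u v \<longrightarrow> u \<in> V \<and> v \<in> V)
     \<and> (\<forall>u v. E u v \<longrightarrow> E v u) \<and> (\<forall>v. \<not> E v v)"

definition nbhd :: "'a set \<Rightarrow> ('a \<Rightarrow> 'a \<Rightarrow> bool) \<Rightarrow> 'a \<Rightarrow> 'a set" where
  "nbhd V E v = {u \<in> V. E v u}"

definition degree :: "'a set \<Rightarrow> ('a \<Rightarrow> 'a \<Rightarrow> bool) \<Rightarrow> 'a \<Rightarrow> nat" where
  "degree V E v = card (nbhd V E v)"

definition max_degree :: "'a set \<Rightarrow> ('a \<Rightarrow> 'a \<Rightarrow> bool) \<Rightarrow> nat" where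
  "max_degree V E = Max (degree V E ` V)"

definition no_isolated :: "'a set \<Rightarrow> ('a \<Rightarrow> 'a \<Rightarrow> bool) \<Rightarrow> bool" where
  "no_isolated V E \<longleftrightarrow> (\<forall>v\<in>V. \<exists>u\<in>V. E v u)"

definition level :: "'a set \<Rightarrow> ('a \<Rightarrow> nat) \<Rightarrow> nat \<Rightarrow> 'a set" where
  "level V f i = {v \<in> V. f v = i}"

text \<open>Total Roman dominating function (values in {0,1,2} on V; f is only
considered on V, and we require f = 0 outside V for a canonical choice).\<close>
definition is_trdf :: "'a set \<Rightarrow> ('a \<Rightarrow> 'a \<Rightarrow> bool) \<Rightarrow> ('a \<Rightarrow> nat) \<Rightarrow> bool" where
  "is_trdf V E f \<longleftrightarrow>
     (\<forall>v\<in>V. f v \<le> 2) \<and> (\<forall>v. v \<notin> V \<longrightarrow> f v = 0)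
     \<and> (\<forall>v\<in>V. f v = 0 \<longrightarrow> (\<exists>u\<in>V. E v u \<and> f u = 2))
     \<and> (\<forall>v\<in>V. f v \<ge> 1 \<longrightarrow> (\<exists>u\<in>V. E v u \<and> f u \<ge> 1))"

definition weight :: "'a set \<Rightarrow> ('a \<Rightarrow> nat) \<Rightarrow> nat" where
  "weight V f = (\<Sum>v\<in>V. f v)"

definition gamma_tR :: "'a set \<Rightarrow> ('a \<Rightarrow> 'a \<Rightarrow> bool) \<Rightarrow> nat" where
  "gamma_tR V E = (LEAST w. \<exists>f. is_trdf V E f \<and> weight V f = w)"

definition is_gamma_tR_function :: "'a set \<Rightarrow> ('a \<Rightarrow> 'a \<Rightarrow> bool) \<Rightarrow> ('a \<Rightarrow> nat) \<Rightarrow> bool" where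
  "is_gamma_tR_function V E f \<longleftrightarrow> is_trdf V E f \<and> weight V f = gamma_tR V E"

end

theory Submission
  imports Defs
begin

text \<open>Every vertex of \<open>V\<^sub>0\<close> has a neighbour in \<open>V\<^sub>2\<close>, and every \<open>u \<in> V\<^sub>2\<close> has a neighbour of
positive weight, so \<open>u\<close> has at most \<open>\<Delta> - 1\<close> neighbours in \<open>V\<^sub>0\<close>. Hence
\<open>|V\<^sub>0| + |V\<^sub>2| \<le> \<Delta> |V\<^sub>2|\<close>, i.e. \<open>|V| \<le> \<Delta> |V\<^sub>2| + |V\<^sub>1|\<close>. Since
\<open>\<gamma>\<^sub>t\<^sub>R = |V\<^sub>1| + 2 |V\<^sub>2|\<close>, all three claims are rearrangements of this inequality
(the last one of its equality case).\<close>

lemma levels_partition: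
  assumes "\<forall>v\<in>V. f v \<le> 2"
  shows "V = level V f 0 \<union> level V f 1 \<union> level V f 2"
    and "level V f 0 \<inter> level V f 1 = {}"
    and "(level V f 0 \<union> level V f 1) \<inter> level V f 2 = {}"
  using assms by (force simp: level_def)+

lemma card_eq_card_levels:
  assumes "finite V" and "\<forall>v\<in>V. f v \<le> 2"
  shows "card V = card (level V f 0) + card (level V f 1) + card (level V f 2)"
proof -
  have "finite (level V f i)" for i
    using assms(1) by (simp add: level_def)
  then show ?thesis
    using levels_partition[OF assms(2)] by (metis card_Un_disjoint finite_UnI)
qed

lemma weight_eq_card_levels:
  assumes "finite V" and "\<forall>v\<in>V. f v \<le> 2"
  shows "weight V f = card (level V f 1) + 2 * card (level V f 2)"
proof -
  have fin: "finite (level V f i)" for i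
    using assms(1) by (simp add: level_def)
  have "weight V f = sum f (level V f 0) + sum f (level V f 1) + sum f (level V f 2)"
    unfolding weight_def using levels_partition[OF assms(2)] fin
    by (metis finite_UnI sum.union_disjoint)
  also have "\<dots> = card (level V f 1) + 2 * card (level V f 2)"
    by (simp add: level_def)
  finally show ?thesis .
qed

lemma degree_le_max_degree:
  assumes "finite V" and "v \<in> V"
  shows "degree V E v \<le> max_degree V E"
  unfolding max_degree_def using assms by simp

lemma level_0_subset_nbhds_level_2:
  assumes "simple_graph V E" and "is_trdf V E f"
  shows "level V f 0 \<subseteq> (\<Union>u\<in>level V f 2. nbhd V E u \<inter> level V f 0)"
proof
  fix v assume v: "v \<in> level V f 0"
  then obtain u where u: "u \<in> V" "E v u" "f u = 2"
    using assms(2) unfolding is_trdf_def level_def by blast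
  have "E u v"
    using assms(1) u(2) unfolding simple_graph_def by blast
  with u v show "v \<in> (\<Union>u\<in>level V f 2. nbhd V E u \<inter> level V f 0)"
    by (auto simp: nbhd_def level_def)
qed

lemma card_nbhd_level_0_less_degree:
  assumes "finite V" and "is_trdf V E f" and u: "u \<in> level V f 2"
  shows "card (nbhd V E u \<inter> level V f 0) < degree V E u"
proof -
  obtain w where w: "w \<in> V" "E u w" "f w \<ge> 1"
    using assms(2) u unfolding is_trdf_def level_def by force
  then have "w \<in> nbhd V E u - level V f 0"
    by (simp add: nbhd_def level_def)
  then have "nbhd V E u \<inter> level V f 0 \<subset> nbhd V E u"
    by blast
  moreover have "finite (nbhd V E u)"
    using assms(1) by (simp add: nbhd_def)
  ultimately show ?thesis
    unfolding degree_def by (rule psubset_card_mono[rotated])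
qed

lemma card_level_0_add_card_level_2_le:
  assumes "simple_graph V E" and "is_trdf V E f"
  shows "card (level V f 0) + card (level V f 2) \<le> max_degree V E * card (level V f 2)"
proof -
  have fin: "finite V"
    using assms(1) by (simp add: simple_graph_def)
  then have fin2: "finite (level V f 2)"
    by (simp add: level_def)
  have "card (level V f 0) \<le> card (\<Union>u\<in>level V f 2. nbhd V E u \<inter> level V f 0)"
    using level_0_subset_nbhds_level_2[OF assms] fin2 fin
    by (intro card_mono) (auto simp: nbhd_def)
  also have "\<dots> \<le> (\<Sum>u\<in>level V f 2. card (nbhd V E u \<inter> level V f 0))"
    using fin2 by (rule card_UN_le)
  finally have "card (level V f 0) \<le> (\<Sum>u\<in>level V f 2. card (nbhd V E u \<inter> level V f 0))" .
  then have "card (level V f 0) + card (level V f 2)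
      \<le> (\<Sum>u\<in>level V f 2. card (nbhd V E u \<inter> level V f 0)) + card (level V f 2)"
    by simp
  also have "\<dots> = (\<Sum>u\<in>level V f 2. card (nbhd V E u \<inter> level V f 0) + 1)"
    by (subst sum.distrib) simp
  also have "\<dots> \<le> (\<Sum>u\<in>level V f 2. max_degree V E)"
  proof (rule sum_mono)
    fix u assume u: "u \<in> level V f 2"
    have "card (nbhd V E u \<inter> level V f 0) < degree V E u"
      using card_nbhd_level_0_less_degree[OF fin assms(2) u] .
    also have "degree V E u \<le> max_degree V E"
      using u fin by (intro degree_le_max_degree) (auto simp: level_def)
    finally show "card (nbhd V E u \<inter> level V f 0) + 1 \<le> max_degree V E"
      by simp
  qed
  finally show ?thesis
    by (simp add: mult.commute)
qed

lemma card_le_max_degree_mult_card_level_2_add_card_level_1: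
  assumes "simple_graph V E" and "is_trdf V E f"
  shows "card V \<le> max_degree V E * card (level V f 2) + card (level V f 1)"
proof -
  have "finite V" and "\<forall>v\<in>V. f v \<le> 2"
    using assms by (simp_all add: simple_graph_def is_trdf_def)
  then show ?thesis
    using card_eq_card_levels card_level_0_add_card_level_2_le[OF assms] by fastforce
qed

theorem theorem4p1:
  fixes V :: "'a set" and E :: "'a \<Rightarrow> 'a \<Rightarrow> bool" and f :: "'a \<Rightarrow> nat"
  assumes "simple_graph V E"
    and "no_isolated V E"
    and "is_gamma_tR_function V E f"
  shows "int (gamma_tR V E) \<ge> int (card V) - (int (max_degree V E) - 2) * int (card (level V f 2))
    \<and> real (card (level V f 2)) \<ge> (real (card V) - real (card (level V f 1))) / real (max_degree V E)
    \<and> (card V = max_degree V E * card (level V f 2) + card (level V f 1) \<longrightarrow>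
         int (gamma_tR V E) = int (card V) - (int (max_degree V E) - 2) * int (card (level V f 2)))"
proof -
  have fin: "finite V"
    using assms(1) by (simp add: simple_graph_def)
  have trdf: "is_trdf V E f" and "gamma_tR V E = weight V f"
    using assms(3) by (auto simp: is_gamma_tR_function_def)
  then have gamma: "gamma_tR V E = card (level V f 1) + 2 * card (level V f 2)"
    using weight_eq_card_levels[OF fin] by (simp add: is_trdf_def)
  note bound = card_le_max_degree_mult_card_level_2_add_card_level_1[OF assms(1) trdf]
  show ?thesis
  proof (intro conjI impI)
    show "int (gamma_tR V E)
        \<ge> int (card V) - (int (max_degree V E) - 2) * int (card (level V f 2))"
      using bound[THEN of_nat_mono[where 'a=int]] gamma by (simp add: algebra_simps)
    show "real (card (level V f 2))
        \<ge> (real (card V) - real (card (level V f 1))) / real (max_degree V E)"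
      using bound[THEN of_nat_mono[where 'a=real]]
      by (cases "max_degree V E = 0") (simp_all add: divide_le_eq mult.commute)
  next
    assume "card V = max_degree V E * card (level V f 2) + card (level V f 1)"
    then show "int (gamma_tR V E)
        = int (card V) - (int (max_degree V E) - 2) * int (card (level V f 2))"
      using gamma by (simp add: algebra_simps)
  qed
qed

end
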